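(* Let $x^*\in\mathbb{R}^n$ satisfy $Ax^*=b$, let $\ell\ge1$ and let $x_1,\ldots,x_\ell\in\mathbb{R}^n$ be affinely independent with $x_\ell=\operatorname{argmin}_{\xi\in\operatorname{aff}(x_1,\ldots,x_\ell)}\|\xi-x^*\|^2$ and $P(x_\ell)\notin\operatorname{aff}(x_1,\ldots,x_\ell)$. Let $V=(x_1-x_\ell,\ldots,x_{\ell-1}-x_\ell)$, $M=(V,P(x_\ell)-x_\ell)$, $\gamma=\frac12(\|r(x_\ell)\|^2+\|P(x_\ell)-x_\ell\|^2)$, let $s^*\in\mathbb{R}^\ell$ be the unique solution of $M^TMs=\gamma e_\ell$ ($e_\ell$ the $\ell$-th unit vector of $\mathbb{R}^\ell$), and put $x_{\ell+1}=x_\ell+Ms^*$. Then \[\langle x_i-x_{\ell+1},x_j-x_{\ell+1}\rangle=(V^TV)_{ij}+\gamma s^*_\ell\quad(1\le i,j\le\ell-1),\] \[\langle x_i-x_{\ell+1},x_\ell-x_{\ell+1}\rangle=\gamma s^*_\ell\quad(1\le i\le\ell).\]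
   Context: Let $A=(a_1,\ldots,a_m)^T\in\mathbb{R}^{m\times n}$ with rows $a_j\in\mathbb{R}^n\setminus\{0\}$, and let $b\in\mathbb{R}^m$ lie in the range of $A$. Norms are Euclidean. For $j=1,\ldots,m$ define the projectors $P_j:\mathbb{R}^n\to\mathbb{R}^n$, $P_j(x)=\big(I-\frac{a_ja_j^T}{\|a_j\|^2}\big)x+\frac{b_j}{\|a_j\|^2}a_j$ (the orthogonal projection onto $\{z:a_j^Tz=b_j\}$), and the Kaczmarz cycle $P=P_m\circ\cdots\circ P_1$. The residual $r:\mathbb{R}^n\to\mathbb{R}^m$ is defined by $r_1(x)=(a_1^Tx-b_1)/\|a_1\|$ and $r_j(x)=(a_j^T(P_{j-1}\circ\cdots\circ P_1)(x)-b_j)/\|a_j\|$ for $j=2,\ldots,m$. $\operatorname{aff}(\cdot)$ denotes the affine hull. *)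

theory Defs
  imports "HOL-Analysis.Analysis"
begin

text \<open>Rows of A are a 1, ..., a m (vectors in R^n), right-hand side b 1, ..., b m.\<close>

definition proj_row :: "(nat \<Rightarrow> real^'n) \<Rightarrow> (nat \<Rightarrow> real) \<Rightarrow> nat \<Rightarrow> real^'n \<Rightarrow> real^'n" where
  "proj_row a b j x =
     x - ((a j \<bullet> x) / (norm (a j))\<^sup>2) *\<^sub>R a j + (b j / (norm (a j))\<^sup>2) *\<^sub>R a j"

fun kacz_part :: "(nat \<Rightarrow> real^'n) \<Rightarrow> (nat \<Rightarrow> real) \<Rightarrow> nat \<Rightarrow> real^'n \<Rightarrow> real^'n" where
  "kacz_part a b 0 x = x"
| "kacz_part a b (Suc k) x = proj_row a b (Suc k) (kacz_part a b k x)"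

definition kacz :: "(nat \<Rightarrow> real^'n) \<Rightarrow> (nat \<Rightarrow> real) \<Rightarrow> nat \<Rightarrow> real^'n \<Rightarrow> real^'n" where
  "kacz a b m x = kacz_part a b m x"

definition resid :: "(nat \<Rightarrow> real^'n) \<Rightarrow> (nat \<Rightarrow> real) \<Rightarrow> nat \<Rightarrow> real^'n \<Rightarrow> real" where
  "resid a b j x = (a j \<bullet> kacz_part a b (j - 1) x - b j) / norm (a j)"

definition resid_norm2 :: "(nat \<Rightarrow> real^'n) \<Rightarrow> (nat \<Rightarrow> real) \<Rightarrow> nat \<Rightarrow> real^'n \<Rightarrow> real" where
  "resid_norm2 a b m x = (\<Sum>j=1..m. (resid a b j x)\<^sup>2)"

text \<open>Columns of M = (V, P(x_l) - x_l): column k is x_k - x_l for k < l, and P(x_l) - x_l for k = l.\<close>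
definition Mcol :: "(nat \<Rightarrow> real^'n) \<Rightarrow> real^'n \<Rightarrow> nat \<Rightarrow> nat \<Rightarrow> real^'n" where
  "Mcol x Px l k = (if k = l then Px - x l else x k - x l)"

end

theory Submission
  imports Defs
begin

text \<open>With \<open>c\<^sub>k\<close> the columns of \<open>M\<close> and \<open>d = M s\<^sup>*\<close>, the Gram system
  \<open>M\<^sup>TM s\<^sup>* = \<gamma> e\<^sub>l\<close> says that \<open>d\<close> is orthogonal to every \<open>x\<^sub>i - x\<^sub>l\<close> and that
  \<open>\<parallel>d\<parallel>\<^sup>2 = \<gamma> s\<^sup>*\<^sub>l\<close>. Since \<open>x\<^sub>i - x\<^sub>l\<^sub>+\<^sub>1 = (x\<^sub>i - x\<^sub>l) - d\<close>, Pythagoras gives both identities.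
  The hypotheses on the Kaczmarz data only guarantee that \<open>s\<^sup>*\<close> exists uniquely;
  the identities hold for any solution of the Gram system.\<close>

lemma inner_sum_gram_solution:
  fixes c :: "'i \<Rightarrow> 'a::real_inner"
  assumes "i \<in> I" and "\<forall>i\<in>I. (\<Sum>k\<in>I. (c i \<bullet> c k) * s k) = g i"
  shows "c i \<bullet> (\<Sum>k\<in>I. s k *\<^sub>R c k) = g i"
  using assms by (simp add: inner_sum_right mult.commute)

lemma norm_sum_gram_solution:
  fixes c :: "'i \<Rightarrow> 'a::real_inner"
  assumes "\<forall>i\<in>I. (\<Sum>k\<in>I. (c i \<bullet> c k) * s k) = g i"
  shows "(\<Sum>k\<in>I. s k *\<^sub>R c k) \<bullet> (\<Sum>k\<in>I. s k *\<^sub>R c k) = (\<Sum>k\<in>I. s k * g k)"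
  using inner_sum_gram_solution[OF _ assms] by (simp add: inner_sum_left)

lemma inner_diff_orthogonal:
  fixes u v d :: "'a::real_inner"
  assumes "u \<bullet> d = 0" and "v \<bullet> d = 0"
  shows "(u - d) \<bullet> (v - d) = u \<bullet> v + d \<bullet> d"
  using assms by (simp add: inner_diff_left inner_diff_right inner_commute)

theorem lemma11:
  fixes a :: "nat \<Rightarrow> real^'n" and b :: "nat \<Rightarrow> real" and m :: nat
    and xs :: "real^'n" and x :: "nat \<Rightarrow> real^'n" and l :: nat
    and s :: "nat \<Rightarrow> real"
  assumes rows_nz: "\<forall>j\<in>{1..m}. a j \<noteq> 0"
    and b_range: "\<exists>z. \<forall>j\<in>{1..m}. a j \<bullet> z = b j"
    and sol: "\<forall>j\<in>{1..m}. a j \<bullet> xs = b j"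
    and l_pos: "l \<ge> 1"
    and aff_indep: "inj_on x {1..l} \<and> \<not> affine_dependent (x ` {1..l})"
    and argmin: "x l \<in> affine hull (x ` {1..l}) \<and>
                 (\<forall>\<xi>\<in>affine hull (x ` {1..l}). (norm (x l - xs))\<^sup>2 \<le> (norm (\<xi> - xs))\<^sup>2)"
    and P_notin: "kacz a b m (x l) \<notin> affine hull (x ` {1..l})"
    and s_sol: "\<forall>i\<in>{1..l}.
        (\<Sum>k=1..l. (Mcol x (kacz a b m (x l)) l i \<bullet> Mcol x (kacz a b m (x l)) l k) * s k)
        = (if i = l then (resid_norm2 a b m (x l) + (norm (kacz a b m (x l) - x l))\<^sup>2) / 2 else 0)"
  shows "(let \<gamma> = (resid_norm2 a b m (x l) + (norm (kacz a b m (x l) - x l))\<^sup>2) / 2;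
              xn = x l + (\<Sum>k=1..l. s k *\<^sub>R Mcol x (kacz a b m (x l)) l k)
          in (\<forall>i\<in>{1..l-1}. \<forall>j\<in>{1..l-1}.
                 (x i - xn) \<bullet> (x j - xn) = (x i - x l) \<bullet> (x j - x l) + \<gamma> * s l)
           \<and> (\<forall>i\<in>{1..l}. (x i - xn) \<bullet> (x l - xn) = \<gamma> * s l))"
proof -
  define c where "c = Mcol x (kacz a b m (x l)) l"
  define \<gamma> where "\<gamma> = (resid_norm2 a b m (x l) + (norm (kacz a b m (x l) - x l))\<^sup>2) / 2"
  define d where "d = (\<Sum>k=1..l. s k *\<^sub>R c k)"
  have gram: "\<forall>i\<in>{1..l}. (\<Sum>k=1..l. (c i \<bullet> c k) * s k) = (if i = l then \<gamma> else 0)"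
    using s_sol unfolding c_def \<gamma>_def .
  have orth: "(x i - x l) \<bullet> d = 0" if "i \<in> {1..l}" for i
    using inner_sum_gram_solution[OF that gram] by (cases "i = l") (auto simp: c_def d_def Mcol_def)
  have "d \<bullet> d = (\<Sum>k=1..l. s k * (if k = l then \<gamma> else 0))"
    unfolding d_def by (rule norm_sum_gram_solution[OF gram])
  also have "\<dots> = \<gamma> * s l"
    using l_pos by (simp add: if_distrib sum.delta cong: if_cong)
  finally have dd: "d \<bullet> d = \<gamma> * s l" .
  have shifted: "(x i - (x l + d)) \<bullet> (x j - (x l + d)) = (x i - x l) \<bullet> (x j - x l) + \<gamma> * s l"
    if "i \<in> {1..l}" "j \<in> {1..l}" for i j
    using inner_diff_orthogonal[OF orth[OF that(1)] orth[OF that(2)]] dd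
    by (simp add: diff_diff_eq)
  have "(x i - (x l + d)) \<bullet> (x l - (x l + d)) = \<gamma> * s l" if "i \<in> {1..l}" for i
    using shifted[OF that, of l] l_pos by simp
  then show ?thesis
    using shifted unfolding Let_def d_def[symmetric] c_def[symmetric] \<gamma>_def[symmetric] by auto
qed

end
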